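(* Let $q$ be a prime power and let $n$ be an odd positive integer coprime to $q$. The following are equivalent: (1) every monic irreducible factor of $x^{n}-1$ in $\mathbb{F}_{q^2}[x]$ is SCRIM; (2) for every prime divisor $l$ of $n$, every monic irreducible factor of $x^{l}-1$ in $\mathbb{F}_{q^2}[x]$ is SCRIM; (3) for every prime divisor $l$ of $n$, $\mathrm{ord}_l(q^2)$ is odd and $\mathrm{ord}_l(q)$ is even.
   Context: $\mathbb{F}_{q^2}$ is the finite field with $q^2$ elements. For $\alpha\in\mathbb{F}_{q^2}$ put $\bar\alpha=\alpha^q$, and for $f(x)=\sum_i f_ix^i$ put $\overline{f(x)}=\sum_i \bar f_i x^i$. For $f(x)$ with $f(0)\neq 0$, $f^*(x)=x^{\deg f}f(0)^{-1}f(1/x)$ and $f^\dagger(x)=\overline{f^*(x)}$. A polynomial is SCRIM if it is monic, irreducible over $\mathbb{F}_{q^2}$, has nonzero constant term, and satisfies $f=f^\dagger$. $\mathrm{ord}_l(a)$ denotes the multiplicative order of $a$ modulo $l$. *)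

theory Defs
  imports "HOL-Computational_Algebra.Computational_Algebra" "HOL-Number_Theory.Pocklington"
begin

text \<open>Conjugation on F_{q^2}: bar a = a^q, extended coefficientwise to polynomials.\<close>
definition poly_bar :: "nat \<Rightarrow> 'a::field poly \<Rightarrow> 'a poly" where
  "poly_bar q f = map_poly (\<lambda>a. a ^ q) f"

text \<open>Reciprocal f*(x) = x^(deg f) f(0)^(-1) f(1/x); reflect_poly f is x^(deg f) f(1/x)
  for f with nonzero constant term.\<close>
definition recip :: "'a::field poly \<Rightarrow> 'a poly" where
  "recip f = Polynomial.smult (inverse (Polynomial.coeff f 0)) (reflect_poly f)"

definition dagger :: "nat \<Rightarrow> 'a::field poly \<Rightarrow> 'a poly" where
  "dagger q f = poly_bar q (recip f)"

definition SCRIM :: "nat \<Rightarrow> 'a::field poly \<Rightarrow> bool" where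
  "SCRIM q f \<longleftrightarrow> lead_coeff f = 1 \<and> irreducible f \<and> Polynomial.coeff f 0 \<noteq> 0 \<and> f = dagger q f"

definition monic_irred_factors :: "'a::field poly \<Rightarrow> 'a poly set" where
  "monic_irred_factors g = {f. lead_coeff f = 1 \<and> irreducible f \<and> f dvd g}"

definition prime_power :: "nat \<Rightarrow> bool" where
  "prime_power q \<longleftrightarrow> (\<exists>p k. prime p \<and> k > 0 \<and> q = p ^ k)"

end

theory Submission
  imports Defs "HOL-Library.Cardinality"
begin

text \<open>Write \<open>Q = q^2\<close>. For a monic irreducible factor \<open>f\<close> of \<open>x^N - 1\<close>, the reciprocal of \<open>f\<close> is
  \<open>x^(deg f) f(x^(N-1))\<close> modulo \<open>x^N - 1\<close>, and conjugation is undone by the Frobenius map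
  \<open>h \<mapsto> h^q\<close>; hence \<open>f\<close> is SCRIM iff \<open>f\<close> divides \<open>f(x^((N-1)q))\<close>, i.e. iff the exponents of
  its roots are stable under multiplication by \<open>-q\<close> modulo \<open>N\<close>. They are always stable under
  multiplication by \<open>Q\<close>. So (3) implies (1) once \<open>-q\<close> is a power of \<open>Q\<close> modulo \<open>n\<close>, i.e. once
  \<open>n\<close> divides \<open>q^j + 1\<close> for some odd \<open>j\<close>; such a \<open>j\<close> comes from odd exponents \<open>e\<close> with
  \<open>q^e = -1\<close> modulo each prime \<open>l\<close> dividing \<open>n\<close>, lifted from \<open>l\<close> to \<open>n\<close>. Conversely, for an
  irreducible factor \<open>g \<noteq> x - 1\<close> of \<open>x^l - 1\<close> the powers \<open>x^t\<close> with \<open>t\<close> in the cosets of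
  \<open>1\<close> and of \<open>-q\<close> under \<open>Q\<close> are distinct roots of \<open>g\<close> modulo \<open>g\<close>, while
  \<open>deg g \<le> ord_l Q\<close>; so the two cosets meet, which gives an odd power of \<open>q\<close> equal to \<open>-1\<close>
  modulo \<open>l\<close>.\<close>

section \<open>Divisibility of polynomials\<close>

lemma pcompose_X_power: "pcompose ([:0, 1:] ^ k) r = (r :: 'a::comm_semiring_1 poly) ^ k"
  by (induction k) (simp_all add: pcompose_mult pcompose_pCons pcompose_1)

lemma pcompose_monom: "pcompose (Polynomial.monom c n) r = Polynomial.smult c (r ^ n)"
  by (simp add: monom_altdef pcompose_smult pcompose_X_power)

lemma dvd_pcompose_diff:
  fixes g u v :: "'a::comm_ring_1 poly"
  shows "(u - v) dvd (pcompose g u - pcompose g v)"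
proof (induction g rule: pCons_induct)
  case (pCons a g)
  have "pcompose (pCons a g) u - pcompose (pCons a g) v
        = (u - v) * pcompose g u + v * (pcompose g u - pcompose g v)"
    by (simp add: pcompose_pCons algebra_simps)
  then show ?case using pCons.IH by simp
qed simp

lemma power_minus_one_dvd_power_diff:
  fixes x :: "'a::comm_ring_1"
  assumes "a mod l = b mod l"
  shows "(x ^ l - 1) dvd (x ^ a - x ^ b)"
proof -
  have *: "(x ^ l - 1) dvd (x ^ a - x ^ b)" if "b \<le> a" "a mod l = b mod l" for a b
  proof -
    have "l dvd a - b" using that by (simp add: mod_eq_dvd_iff_nat)
    then obtain t where "a - b = l * t" by (elim dvdE)
    then have t: "a = b + l * t" using that(1) by simp
    have "x ^ a - x ^ b = x ^ b * ((x ^ l) ^ t - 1)"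
      by (simp add: t power_add power_mult algebra_simps)
    moreover have "(x ^ l - 1) dvd (x ^ l) ^ t - 1"
      by (simp add: power_diff_1_eq)
    ultimately show ?thesis by simp
  qed
  show ?thesis
  proof (cases "b \<le> a")
    case False
    have "(x ^ l - 1) dvd x ^ b - x ^ a" by (rule *) (use False assms in auto)
    then show ?thesis by (metis dvd_minus_iff minus_diff_eq)
  qed (use * assms in blast)
qed

lemma dvd_pcompose_X_power_mod:
  fixes g :: "'a::comm_ring_1 poly"
  assumes "g dvd [:0, 1:] ^ l - 1" "g dvd pcompose g ([:0, 1:] ^ a)" "a mod l = b mod l"
  shows "g dvd pcompose g ([:0, 1:] ^ b)"
proof -
  have "([:0, 1:] ^ l - 1) dvd ([:0, 1:] ^ a - [:0, 1:] ^ b :: 'a poly)"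
    using assms(3) by (rule power_minus_one_dvd_power_diff)
  also have "\<dots> dvd pcompose g ([:0, 1:] ^ a) - pcompose g ([:0, 1:] ^ b)"
    by (rule dvd_pcompose_diff)
  finally show ?thesis using assms(1,2) by (meson dvd_trans dvd_diff_right_iff)
qed

lemma dvd_pcompose_X_power_mult:
  fixes g :: "'a::comm_ring_1 poly"
  assumes "g dvd pcompose g ([:0, 1:] ^ a)" "g dvd pcompose g ([:0, 1:] ^ b)"
  shows "g dvd pcompose g ([:0, 1:] ^ (a * b))"
proof -
  obtain u where u: "pcompose g ([:0, 1:] ^ a) = g * u" using assms(1) by (elim dvdE)
  have "pcompose ([:0, 1:] ^ a) ([:0, 1:] ^ b) = ([:0, 1:] :: 'a poly) ^ (a * b)"
    by (simp add: pcompose_X_power mult.commute flip: power_mult)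
  then have "pcompose g ([:0, 1:] ^ (a * b)) = pcompose (pcompose g ([:0, 1:] ^ a)) ([:0, 1:] ^ b)"
    by (simp flip: pcompose_assoc)
  also have "\<dots> = pcompose g ([:0, 1:] ^ b) * pcompose u ([:0, 1:] ^ b)"
    by (simp add: u pcompose_mult)
  finally show ?thesis using assms(2) by simp
qed

text \<open>Modulo \<open>r ^ N - 1\<close>, the power \<open>r ^ (N - 1)\<close> acts as \<open>r\<inverse>\<close>.\<close>

lemma reflect_poly_pcompose_cong:
  fixes g r :: "'a::comm_ring_1 poly"
  assumes "N > 0"
  shows "(r ^ N - 1) dvd (r ^ degree g * pcompose g (r ^ (N - 1)) - pcompose (reflect_poly g) r)"
proof (induction g rule: pCons_induct)
  case (pCons c g)
  show ?case
  proof (cases "g = 0")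
    case False
    define G where "G = pcompose g (r ^ (N - 1))"
    have rN: "r * r ^ (N - 1) = r ^ N" using assms by (simp flip: power_Suc)
    have "r ^ degree (pCons c g) * pcompose (pCons c g) (r ^ (N - 1))
          - pcompose (reflect_poly (pCons c g)) r
        = (r ^ N - 1) * (r ^ degree g * G) + (r ^ degree g * G - pcompose (reflect_poly g) r)"
      using False by (simp add: pcompose_pCons reflect_poly_pCons' pcompose_add pcompose_monom G_def
          algebra_simps flip: rN)
    then show ?thesis using pCons.IH by (simp add: G_def)
  qed simp
qed simp

lemma monic_dvd_imp_eq:
  fixes f g :: "'a::field poly"
  assumes "f dvd g" "lead_coeff f = 1" "lead_coeff g = 1" "degree g = degree f"
  shows "f = g"
proof -
  obtain u where u: "g = f * u" using assms(1) by (elim dvdE)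
  then have "u \<noteq> 0" "f \<noteq> 0" using assms(3) by auto
  then have "degree u = 0" using assms(4) u degree_mult_eq by force
  then have "u = [:lead_coeff u:]" by (metis degree_0_id)
  moreover have "lead_coeff u = 1" using assms(2,3) u by (simp add: lead_coeff_mult)
  ultimately show ?thesis using u by simp
qed

lemma eq_if_dvd_diff_degree_less:
  fixes g a b :: "'a::field poly"
  assumes "g dvd a - b" "degree a < degree g" "degree b < degree g"
  shows "a = b"
proof (rule ccontr)
  assume "a \<noteq> b"
  then have "degree g \<le> degree (a - b)" using assms(1) by (simp add: dvd_imp_degree_le)
  also have "\<dots> \<le> max (degree a) (degree b)" by (rule degree_diff_le_max)
  finally show False using assms(2,3) by simp
qed

lemma exists_monic_irreducible_factor:
  fixes p :: "'a::field poly"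
  assumes "p \<noteq> 0" "\<not> is_unit p"
  obtains g where "lead_coeff g = 1" "irreducible g" "g dvd p"
proof -
  have "\<exists>g. irreducible g \<and> g dvd p" using assms
  proof (induction "degree p" arbitrary: p rule: less_induct)
    case less
    show ?case
    proof (cases "irreducible p")
      case False
      then obtain a b where ab: "p = a * b" "\<not> is_unit a" "\<not> is_unit b"
        using less.prems by (auto simp: irreducible_def)
      then have "a \<noteq> 0" "b \<noteq> 0" using less.prems by auto
      have "degree b > 0" using ab(3) \<open>b \<noteq> 0\<close> is_unit_iff_degree by blast
      then have "degree a < degree p" using ab(1) degree_mult_eq[OF \<open>a \<noteq> 0\<close> \<open>b \<noteq> 0\<close>] by simp
      then obtain g where "irreducible g" "g dvd a" using less.hyps \<open>a \<noteq> 0\<close> ab(2) by blast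
      then show ?thesis using ab(1) by (meson dvd_mult2)
    qed (use dvd_refl in blast)
  qed
  then obtain g where g: "irreducible g" "g dvd p" by blast
  then have "g \<noteq> 0" by auto
  define c where "c = inverse (lead_coeff g)"
  have unit: "is_unit [:c:]" using \<open>g \<noteq> 0\<close> by (simp add: c_def is_unit_const_poly_iff dvd_field_iff)
  show ?thesis
  proof
    show "lead_coeff ([:c:] * g) = 1" using \<open>g \<noteq> 0\<close> by (simp add: c_def lead_coeff_mult)
    show "irreducible ([:c:] * g)" using g(1) irreducible_mult_unit_left[OF unit] by simp
    show "[:c:] * g dvd p" using g(2) \<open>g \<noteq> 0\<close> by (simp add: c_def smult_dvd)
  qed
qed

lemma not_dvd_X_if_dvd_X_power_minus_one:
  fixes g :: "'a::field poly"
  assumes "g dvd [:0, 1:] ^ N - 1" "N > 0" "\<not> is_unit g"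
  shows "\<not> g dvd [:0, 1:]"
proof
  assume "g dvd [:0, 1:]"
  then have "g dvd [:0, 1:] ^ N" using assms(2) by (metis dvd_power dvd_trans)
  then have "g dvd [:0, 1:] ^ N - ([:0, 1:] ^ N - 1)" using assms(1) by (rule dvd_diff)
  then show False using assms(3) by simp
qed

lemma exists_irreducible_factor_not_dvd_X_minus_one:
  assumes "l > 1" "of_nat l \<noteq> (0 :: 'a)"
  obtains g :: "'a::field poly"
  where "lead_coeff g = 1" "irreducible g" "g dvd [:0, 1:] ^ l - 1" "\<not> g dvd [:0, 1:] - 1"
proof -
  define X :: "'a poly" where "X = [:0, 1:]"
  define Phi where "Phi = (\<Sum>i<l. X ^ i)"
  have XPhi: "X ^ l - 1 = (X - 1) * Phi" unfolding Phi_def by (rule power_diff_1_eq)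
  have X1: "X - 1 = [:-1, 1:]"
    unfolding X_def by (rule poly_eqI) (simp add: coeff_pCons coeff_1 split: nat.split)
  have "degree (X ^ l - 1) = l"
    using degree_add_eq_left[of "-1" "X ^ l"] assms(1) by (simp add: X_def degree_linear_power)
  then have "Phi \<noteq> 0" using assms(1) XPhi by auto
  then have "degree (X ^ l - 1) = 1 + degree Phi" unfolding XPhi X1 by (subst degree_mult_eq) auto
  then have "\<not> is_unit Phi"
    using assms(1) \<open>degree (X ^ l - 1) = l\<close> is_unit_iff_degree[OF \<open>Phi \<noteq> 0\<close>] by simp
  then obtain g where g: "lead_coeff g = 1" "irreducible g" "g dvd Phi"
    using exists_monic_irreducible_factor[OF \<open>Phi \<noteq> 0\<close>] by blast
  show ?thesis
  proof (rule that[OF g(1,2)])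
    show "g dvd [:0, 1:] ^ l - 1" using g(3) by (simp add: XPhi flip: X_def)
    show "\<not> g dvd [:0, 1:] - 1"
    proof
      assume "g dvd [:0, 1:] - 1"
      then have g1: "g dvd [:-1, 1:]" using X1 by (simp add: X_def)
      have "g \<noteq> 0" "\<not> is_unit g" using g(2) by (auto simp: irreducible_def)
      then have "degree g > 0" using is_unit_iff_degree by blast
      moreover have "degree g \<le> 1" using dvd_imp_degree_le[OF g1] by simp
      ultimately have "g = [:-1, 1:]" using monic_dvd_imp_eq[OF g1 g(1)] by simp
      then have "poly Phi 1 = 0" using g(3) by (simp add: poly_eq_0_iff_dvd)
      moreover have "poly Phi 1 = of_nat l" by (simp add: Phi_def X_def poly_sum)
      ultimately show False using assms(2) by simp
    qed
  qed
qed

lemma eq_if_dvd_X_power_diff: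
  fixes g :: "'a::field poly"
  assumes "prime l" "prime_elem g" "g dvd [:0, 1:] ^ l - 1" "\<not> g dvd [:0, 1:] - 1"
    and "s < l" "t < l" "g dvd [:0, 1:] ^ s - [:0, 1:] ^ t"
  shows "s = t"
proof -
  define X :: "'a poly" where "X = [:0, 1:]"
  have no_root: "\<not> g dvd X ^ a - 1" if "0 < a" "a < l" for a
  proof
    assume ga: "g dvd X ^ a - 1"
    have "coprime a l" using that assms(1) by (metis prime_imp_coprime dvd_imp_le not_le coprime_commute)
    then have "\<exists>x y. a * x = l * y + 1" using bezout_nat[of a l] that by simp
    then obtain x y where "a * x = l * y + 1" by blast
    then have "(a * x) mod l = 1 mod l" by (metis mod_mult_self4 add.commute)
    then have "(X ^ l - 1) dvd X ^ (a * x) - X ^ 1" by (rule power_minus_one_dvd_power_diff)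
    then have "g dvd X ^ (a * x) - X" using assms(3) X_def by (metis dvd_trans power_one_right)
    moreover have "(X ^ a - 1) dvd X ^ (a * x) - 1"
      using power_minus_one_dvd_power_diff[of "a * x" a 0 X] by simp
    then have "g dvd X ^ (a * x) - 1" using ga by (rule dvd_trans[rotated])
    ultimately have "g dvd (X ^ (a * x) - 1) - (X ^ (a * x) - X)" by (rule dvd_diff[rotated])
    then show False using assms(4) by (simp add: X_def)
  qed
  have "\<not> g dvd X"
    unfolding X_def using assms(1-3) not_dvd_X_if_dvd_X_power_minus_one prime_elem_not_unit prime_gt_0_nat
    by blast
  have *: "s = t" if "s \<le> t" "t < l" "g dvd X ^ t - X ^ s" for s t
  proof (rule ccontr)
    assume "s \<noteq> t"
    have "X ^ t - X ^ s = X ^ s * (X ^ (t - s) - 1)"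
      using that(1) by (simp add: algebra_simps flip: power_add)
    then have "g dvd X ^ (t - s) - 1"
      using that(3) \<open>\<not> g dvd X\<close> assms(2) prime_elem_dvd_power by (auto simp: prime_elem_dvd_mult_iff)
    then show False using no_root[of "t - s"] \<open>s \<noteq> t\<close> that by auto
  qed
  have "g dvd X ^ t - X ^ s" using assms(7) unfolding X_def by (metis dvd_minus_iff minus_diff_eq)
  then show ?thesis using *[of s t] *[of t s] assms(5-7) unfolding X_def by (cases "s \<le> t") auto
qed

text \<open>Roots of \<open>P\<close> in the domain \<open>R / (p)\<close>, counted without forming the quotient ring.\<close>

lemma card_roots_mod_prime_le_degree:
  fixes p :: "'a::idom" and P :: "'a poly"
  assumes "prime_elem p" "finite A" "\<not> [:p:] dvd P"
    and "\<And>y. y \<in> A \<Longrightarrow> p dvd poly P y"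
    and "\<And>a b. a \<in> A \<Longrightarrow> b \<in> A \<Longrightarrow> p dvd a - b \<Longrightarrow> a = b"
  shows "card A \<le> degree P"
  using assms(2-)
proof (induction "degree P" arbitrary: P A)
  case 0
  then obtain c where "P = [:c:]" by (metis degree_0_id)
  then show ?case using 0 by (cases "A = {}") auto
next
  case (Suc m)
  show ?case
  proof (cases "A = {}")
    case False
    then obtain a where a: "a \<in> A" by blast
    define S where "S = synthetic_div P a"
    have PS: "P = [:-a, 1:] * S + [:poly P a:]"
      unfolding S_def by (rule synthetic_div_correct'[symmetric])
    have pa: "p dvd poly P a" using Suc.prems a by blast
    have "card (A - {a}) \<le> degree S"
    proof (rule Suc.hyps)
      show "m = degree S" unfolding S_def using Suc.hyps(2) by (simp add: degree_synthetic_div)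
      show "\<not> [:p:] dvd S"
      proof
        assume "[:p:] dvd S"
        then have "[:p:] dvd [:-a, 1:] * S + [:poly P a:]" using pa by (intro dvd_add dvd_mult) simp_all
        then show False using Suc.prems(2) PS by simp
      qed
      fix y assume y: "y \<in> A - {a}"
      have "poly P y = (y - a) * poly S y + poly P a" by (subst PS) (simp add: algebra_simps)
      then have "p dvd (y - a) * poly S y" using Suc.prems(3) pa y by (metis DiffD1 dvd_add_left_iff)
      moreover have "\<not> p dvd y - a" using Suc.prems(4) a y by blast
      ultimately show "p dvd poly S y" using assms(1) prime_elem_dvd_mult_iff by blast
    qed (use Suc.prems in auto)
    then show ?thesis using a Suc.prems(1) Suc.hyps(2) S_def
      by (simp add: card_Diff_singleton_if degree_synthetic_div)
  qed simp
qed

lemma card_stable_exponents_le_degree: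
  fixes g :: "'a::field poly"
  assumes "irreducible g" "finite T" "\<And>t. t \<in> T \<Longrightarrow> g dvd pcompose g ([:0, 1:] ^ t)"
    and "\<And>s t. s \<in> T \<Longrightarrow> t \<in> T \<Longrightarrow> g dvd [:0, 1:] ^ s - [:0, 1:] ^ t \<Longrightarrow> s = t"
  shows "card T \<le> degree g"
proof -
  define P where "P = map_poly (\<lambda>c. [:c:]) g"
  have "inj_on (\<lambda>t. [:0, 1::'a:] ^ t) T"
  proof (rule inj_onI)
    fix s t assume "s \<in> T" "t \<in> T" "[:0, 1::'a:] ^ s = [:0, 1:] ^ t"
    then show "s = t" using assms(4)[of s t] by simp
  qed
  then have "card T = card ((\<lambda>t. [:0, 1::'a:] ^ t) ` T)" by (simp add: card_image)
  also have "\<dots> \<le> degree P"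
  proof (rule card_roots_mod_prime_le_degree)
    show "prime_elem g" using assms(1) by (rule field_poly_irreducible_imp_prime)
    show "finite ((\<lambda>t. [:0, 1::'a:] ^ t) ` T)" using assms(2) by simp
    have "g \<noteq> 0" "\<not> is_unit g" using assms(1) by (auto simp: irreducible_def)
    then have "is_unit [:lead_coeff g:]" by (simp add: is_unit_const_poly_iff dvd_field_iff)
    then have "\<not> g dvd [:lead_coeff g:]" using \<open>\<not> is_unit g\<close> dvd_unit_imp_unit by blast
    moreover have "Polynomial.coeff P (degree g) = [:lead_coeff g:]" by (simp add: P_def coeff_map_poly)
    ultimately show "\<not> [:g:] dvd P" by (metis const_poly_dvd_iff)
  qed (auto simp: P_def pcompose_altdef[symmetric] assms(3) dest: assms(4))
  also have "degree P = degree g" unfolding P_def by (rule degree_map_poly) simp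
  finally show ?thesis .
qed

section \<open>Finite fields and the Frobenius map\<close>

lemma prime_CHAR_finite_field: "prime CHAR('a::{field,finite})"
  by (rule prime_CHAR_semidom) (simp add: finite_imp_CHAR_pos)

lemma of_nat_neq_zero_if_coprime_CHAR:
  assumes "coprime l (CHAR('a::{field,finite}))"
  shows "of_nat l \<noteq> (0 :: 'a)"
proof
  assume "of_nat l = (0 :: 'a)"
  then have "CHAR('a) dvd l" by (simp add: of_nat_eq_0_iff_char_dvd)
  then show False using assms prime_CHAR_finite_field by (metis coprime_absorb_right not_prime_unit)
qed

lemma CHAR_power_if_prime_power_card:
  assumes "prime_power q" "CARD('a::{field,finite}) = q ^ 2"
  obtains e where "e > 0" "q = CHAR('a) ^ e"
proof -
  obtain p k where pk: "prime p" "k > 0" "q = p ^ k"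
    using assms(1) unfolding prime_power_def by blast
  have "CHAR('a) dvd p ^ (k * 2)"
    using CHAR_dvd_CARD[where 'a = 'a] assms(2) pk by (simp add: power_mult)
  then have "CHAR('a) = p"
    using prime_CHAR_finite_field pk(1) by (metis prime_dvd_power primes_dvd_imp_eq)
  then show ?thesis using that pk by blast
qed

lemma finite_field_power_CARD: "(x :: 'a::{field,finite}) ^ CARD('a) = x"
proof (cases "x = 0")
  case False
  define U where "U = UNIV - {0 :: 'a}"
  have "(\<Prod>y\<in>U. x * y) = (\<Prod>y\<in>U. y)"
    by (rule prod.reindex_bij_witness[of _ "\<lambda>y. y / x" "\<lambda>y. x * y"]) (use False in \<open>auto simp: U_def\<close>)
  moreover have "(\<Prod>y\<in>U. y) \<noteq> 0" by (simp add: U_def)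
  ultimately have "x ^ card U = 1" by (simp add: prod.distrib)
  moreover have "CARD('a) = Suc (card U)" by (simp add: U_def card_Diff_singleton)
  ultimately show ?thesis by simp
qed simp

lemma finite_field_power_CARD_power: "(x :: 'a::{field,finite}) ^ (CARD('a) ^ i) = x"
  by (induction i) (simp_all add: power_mult finite_field_power_CARD)

lemma poly_power_CHAR_power:
  fixes h :: "'a::comm_semiring_1 poly"
  assumes "prime CHAR('a)" "N = CHAR('a) ^ j"
  shows "h ^ N = pcompose (map_poly (\<lambda>c. c ^ N) h) ([:0, 1:] ^ N)"
proof -
  have "N > 0" using assms prime_gt_0_nat by auto
  then show ?thesis
  proof (induction h rule: pCons_induct)
    case (pCons a h)
    have "(pCons a h) ^ N = ([:a:] + [:0, 1:] * h) ^ N" by simp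
    also have "\<dots> = [:a:] ^ N + ([:0, 1:] * h) ^ N"
      using freshmans_dream' assms by (metis semiring_char_poly)
    also have "[:a:] ^ N = [:a ^ N:]" by (induction N) (auto simp: algebra_simps)
    also have "([:0, 1:] * h) ^ N = [:0, 1:] ^ N * pcompose (map_poly (\<lambda>c. c ^ N) h) ([:0, 1:] ^ N)"
      using pCons by (simp only: power_mult_distrib)
    finally show ?case using pCons.prems by (simp add: map_poly_pCons pcompose_pCons zero_power)
  qed (simp add: zero_power)
qed

lemma poly_power_CARD_power:
  fixes h :: "'a::{field,finite} poly"
  assumes "CARD('a) = CHAR('a) ^ j"
  shows "h ^ (CARD('a) ^ i) = pcompose h ([:0, 1:] ^ (CARD('a) ^ i))"
proof -
  have "CARD('a) ^ i = CHAR('a) ^ (j * i)" using assms by (simp add: power_mult)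
  then have "h ^ (CARD('a) ^ i)
      = pcompose (map_poly (\<lambda>c. c ^ (CARD('a) ^ i)) h) ([:0, 1:] ^ (CARD('a) ^ i))"
    by (rule poly_power_CHAR_power[OF prime_CHAR_finite_field])
  then show ?thesis by (simp add: finite_field_power_CARD_power map_poly_idI)
qed

lemma dvd_pcompose_X_power_CARD_power:
  fixes f :: "'a::{field,finite} poly"
  assumes "CARD('a) = CHAR('a) ^ j"
  shows "f dvd pcompose f ([:0, 1:] ^ (CARD('a) ^ i))"
  using poly_power_CARD_power[OF assms] by (metis dvd_power zero_less_card_finite zero_less_power)

lemma dvd_power_CARD_power_diff_self:
  fixes g y :: "'a::{field,finite} poly"
  assumes "CARD('a) = CHAR('a) ^ j" "g dvd [:0, 1:] ^ (CARD('a) ^ k) - [:0, 1:]"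
  shows "g dvd y ^ (CARD('a) ^ k) - y"
proof -
  have "y ^ (CARD('a) ^ k) - y = pcompose y ([:0, 1:] ^ (CARD('a) ^ k)) - pcompose y [:0, 1:]"
    by (subst poly_power_CARD_power[OF assms(1)]) simp
  also have "([:0, 1:] ^ (CARD('a) ^ k) - [:0, 1:]) dvd \<dots>" by (rule dvd_pcompose_diff)
  finally show ?thesis using assms(2) by (rule dvd_trans[rotated])
qed

lemma card_Poly_lists_length:
  "card (Poly ` {xs :: 'a::{zero,finite} list. length xs = d}) = CARD('a) ^ d"
proof -
  have "inj_on Poly {xs :: 'a list. length xs = d}"
  proof (rule inj_onI)
    fix xs ys :: "'a list"
    assume "xs \<in> {xs. length xs = d}" "ys \<in> {xs. length xs = d}" "Poly xs = Poly ys"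
    moreover from \<open>Poly xs = Poly ys\<close> have "nth_default 0 xs i = nth_default 0 ys i" for i
      by (metis coeff_Poly_eq)
    ultimately show "xs = ys"
      by (intro nth_equalityI) (auto simp: nth_default_def split: if_splits, metis)
  qed
  then show ?thesis using card_lists_length_eq[of "UNIV :: 'a set" d] by (simp add: card_image)
qed

text \<open>The \<open>CARD('a) ^ degree g\<close> polynomials of degree below \<open>degree g\<close> are pairwise
  incongruent roots of \<open>Y ^ CARD('a) ^ k - Y\<close> modulo \<open>g\<close>.\<close>

lemma degree_le_if_dvd_X_power_minus_one:
  fixes g :: "'a::{field,finite} poly"
  assumes "CARD('a) = CHAR('a) ^ j" "irreducible g" "g dvd [:0, 1:] ^ l - 1"
    and "[CARD('a) ^ k = 1] (mod l)" "k > 0"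
  shows "degree g \<le> k"
proof -
  define N where "N = CARD('a) ^ k"
  define d where "d = degree g"
  have "g \<noteq> 0" "\<not> is_unit g" using assms(2) by (auto simp: irreducible_def)
  then have "d > 0" unfolding d_def using is_unit_iff_degree by blast
  have "CARD('a) > 1"
    using card_mono[of "UNIV :: 'a set" "{0, 1}"] by simp
  then have "N > 1" unfolding N_def using assms(5) by (rule one_less_power)
  have "N mod l = 1 mod l" using assms(4) unfolding N_def cong_def .
  then have "([:0, 1:] ^ l - 1) dvd ([:0, 1:] ^ N - [:0, 1:] ^ 1 :: 'a poly)"
    by (rule power_minus_one_dvd_power_diff)
  with assms(3) have gN: "g dvd [:0, 1:] ^ N - [:0, 1:]" by (simp add: dvd_trans)
  define Y where "Y = Poly ` {xs :: 'a list. length xs = d}"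
  define P :: "'a poly poly" where "P = Polynomial.monom 1 N - Polynomial.monom 1 1"
  have "card Y \<le> degree P"
  proof (rule card_roots_mod_prime_le_degree)
    show "prime_elem g" using assms(2) by (rule field_poly_irreducible_imp_prime)
    show "finite Y" unfolding Y_def using finite_lists_length_eq[of "UNIV :: 'a set" d] by simp
    have "Polynomial.coeff P 1 = -1" unfolding P_def using \<open>N > 1\<close> by (simp add: coeff_monom)
    then show "\<not> [:g:] dvd P" using \<open>\<not> is_unit g\<close> by (metis const_poly_dvd_iff dvd_minus_iff)
    show "g dvd poly P y" for y
      using dvd_power_CARD_power_diff_self[OF assms(1) gN[unfolded N_def]]
      by (simp add: P_def N_def poly_monom)
    have "degree y < d" if "y \<in> Y" for y
      using that \<open>d > 0\<close> unfolding Y_def by (auto intro!: degree_lessI simp: nth_default_def)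
    then show "a = b" if "a \<in> Y" "b \<in> Y" "g dvd a - b" for a b
      using that eq_if_dvd_diff_degree_less unfolding d_def by blast
  qed
  moreover have "degree P \<le> N"
    unfolding P_def using \<open>N > 1\<close> by (intro degree_diff_le) (simp_all add: degree_monom_eq)
  moreover have "card Y = CARD('a) ^ d" unfolding Y_def by (rule card_Poly_lists_length)
  ultimately have "CARD('a) ^ d \<le> CARD('a) ^ k" unfolding N_def by simp
  then show ?thesis unfolding d_def using power_le_imp_le_exp \<open>CARD('a) > 1\<close> by blast
qed

section \<open>A divisibility criterion for SCRIM polynomials\<close>

lemma SCRIM_iff_dvd_dagger:
  fixes f :: "'a::field poly"
  assumes "q > 0" "lead_coeff f = 1" "irreducible f" "Polynomial.coeff f 0 \<noteq> 0"
  shows "SCRIM q f \<longleftrightarrow> f dvd dagger q f"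
proof
  assume "f dvd dagger q f"
  moreover have "lead_coeff (dagger q f) = 1" "degree (dagger q f) = degree f"
    using assms(1,4)
    by (simp_all add: dagger_def poly_bar_def recip_def coeff_reflect_poly coeff_map_poly
        degree_map_poly zero_power)
  ultimately have "f = dagger q f" using monic_dvd_imp_eq assms(2) by metis
  then show "SCRIM q f" using assms(2-4) unfolding SCRIM_def by blast
qed (metis SCRIM_def dvd_refl)

lemma dvd_dagger_iff_dvd_pcompose_reflect_poly:
  fixes f :: "'a::{field,finite} poly"
  assumes q: "q = CHAR('a) ^ e" "CARD('a) = q ^ 2" and "prime_elem f" "Polynomial.coeff f 0 \<noteq> 0"
  shows "f dvd dagger q f \<longleftrightarrow> f dvd pcompose (reflect_poly f) ([:0, 1:] ^ q)"
proof -
  define bar where "bar = map_poly (\<lambda>c :: 'a. c ^ q)"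
  have "q > 0" using q(2) by (cases q) auto
  \<comment> \<open>Conjugating twice raises coefficients to the power \<open>q ^ 2 = CARD('a)\<close>.\<close>
  have "bar (bar h) = h" for h
    using \<open>q > 0\<close> q(2) unfolding bar_def
    by (simp add: map_poly_map_poly o_def zero_power finite_field_power_CARD map_poly_idI
        flip: power_mult power2_eq_square q(2))
  then have bar_power: "(bar h) ^ q = pcompose h ([:0, 1:] ^ q)" for h
    using poly_power_CHAR_power[OF prime_CHAR_finite_field q(1), of "bar h"] q(1)
    unfolding bar_def by simp
  have "f dvd dagger q f \<longleftrightarrow> f dvd (bar (recip f)) ^ q"
    using prime_elem_dvd_power_iff[OF assms(3)] \<open>q > 0\<close> unfolding dagger_def poly_bar_def bar_def by simp
  also have "\<dots> \<longleftrightarrow> f dvd Polynomial.smult (inverse (Polynomial.coeff f 0))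
      (pcompose (reflect_poly f) ([:0, 1:] ^ q))"
    unfolding bar_power recip_def pcompose_smult ..
  finally show ?thesis using assms(4) by (simp add: dvd_smult_iff)
qed

lemma dvd_pcompose_reflect_poly_iff:
  fixes f :: "'a::field poly"
  assumes "prime_elem f" "f dvd [:0, 1:] ^ N - 1" "N > 0"
  shows "f dvd pcompose (reflect_poly f) ([:0, 1:] ^ q)
    \<longleftrightarrow> f dvd pcompose f ([:0, 1:] ^ ((N - 1) * q))"
proof -
  define X :: "'a poly" where "X = [:0, 1:]"
  define A where "A = X ^ (q * degree f) * pcompose f (X ^ ((N - 1) * q))"
  have "(X ^ N - 1) dvd (X ^ q) ^ N - 1"
    using power_minus_one_dvd_power_diff[of "q * N" N 0 X] by (simp add: power_mult)
  also have "\<dots> dvd A - pcompose (reflect_poly f) (X ^ q)"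
    using reflect_poly_pcompose_cong[OF assms(3), of "X ^ q" f]
    by (simp add: A_def mult.commute flip: power_mult)
  finally have "f dvd A - pcompose (reflect_poly f) (X ^ q)"
    using assms(2) unfolding X_def by (rule dvd_trans[rotated])
  then have "f dvd (A - pcompose (reflect_poly f) (X ^ q)) + pcompose (reflect_poly f) (X ^ q)
    \<longleftrightarrow> f dvd pcompose (reflect_poly f) (X ^ q)"
    by (rule dvd_add_right_iff)
  then have "f dvd pcompose (reflect_poly f) (X ^ q) \<longleftrightarrow> f dvd A" by simp
  also have "\<dots> \<longleftrightarrow> f dvd pcompose f (X ^ ((N - 1) * q))"
  proof -
    have "\<not> f dvd X"
      unfolding X_def using assms not_dvd_X_if_dvd_X_power_minus_one prime_elem_not_unit by blast
    then show ?thesis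
      unfolding A_def using assms(1) prime_elem_dvd_power by (auto simp: prime_elem_dvd_mult_iff)
  qed
  finally show ?thesis unfolding X_def .
qed

lemma SCRIM_iff_dvd_pcompose:
  fixes f :: "'a::{field,finite} poly"
  assumes q: "q = CHAR('a) ^ e" "CARD('a) = q ^ 2"
    and f: "lead_coeff f = 1" "irreducible f" "f dvd [:0, 1:] ^ N - 1" and "N > 0"
  shows "SCRIM q f \<longleftrightarrow> f dvd pcompose f ([:0, 1:] ^ ((N - 1) * q))"
proof -
  have "q > 0" using q(2) by (cases q) auto
  have "prime_elem f" using f(2) by (rule field_poly_irreducible_imp_prime)
  have "Polynomial.coeff f 0 \<noteq> 0"
  proof
    assume "Polynomial.coeff f 0 = 0"
    then have "[:0, 1:] dvd f" by (simp add: dvd_iff_poly_eq_0 poly_0_coeff_0)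
    then have "[:0, 1:] dvd [:0, 1:] ^ N - (1 :: 'a poly)" using f(3) by (rule dvd_trans)
    then show False using \<open>N > 0\<close> by (simp add: dvd_iff_poly_eq_0 zero_power)
  qed
  show ?thesis
    using SCRIM_iff_dvd_dagger[OF \<open>q > 0\<close> f(1,2) \<open>Polynomial.coeff f 0 \<noteq> 0\<close>]
      dvd_dagger_iff_dvd_pcompose_reflect_poly[OF q \<open>prime_elem f\<close> \<open>Polynomial.coeff f 0 \<noteq> 0\<close>]
      dvd_pcompose_reflect_poly_iff[OF \<open>prime_elem f\<close> f(3) \<open>N > 0\<close>]
    by simp
qed

section \<open>Orders modulo primes\<close>

lemma odd_exponent_neg_one_if_cong_neg:
  fixes q l a b :: nat
  assumes "coprime q l" "odd (a + b)" "[int q ^ a = - (int q ^ b)] (mod int l)"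
  shows "\<exists>e. odd e \<and> [int q ^ e = - 1] (mod int l)"
proof -
  have *: "\<exists>e. odd e \<and> [int q ^ e = - 1] (mod int l)"
    if "b \<le> a" "odd (a + b)" "int l dvd int q ^ a + int q ^ b" for a b
  proof -
    have "int q ^ a + int q ^ b = int q ^ b * (int q ^ (a - b) + 1)"
      using that(1) by (simp add: algebra_simps flip: power_add)
    moreover have "coprime (int l) (int q ^ b)" using assms(1) by (simp add: coprime_commute)
    ultimately have "int l dvd int q ^ (a - b) + 1"
      using that(3) coprime_dvd_mult_right_iff by metis
    moreover have "odd (a - b)" using that(1,2) by presburger
    ultimately show ?thesis by (intro exI[of _ "a - b"]) (simp add: cong_iff_dvd_diff)
  qed
  have "int l dvd int q ^ a + int q ^ b" using assms(3) by (simp add: cong_iff_dvd_diff)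
  then show ?thesis using *[of a b] *[of b a] assms(2) by (cases "b \<le> a") (simp_all add: add.commute)
qed

lemma cong_int_power_one_iff: "[int q ^ k = 1] (mod int l) \<longleftrightarrow> [q ^ k = 1] (mod l)"
  by (metis cong_int_iff of_nat_1 of_nat_power)

lemma odd_ord_square_even_ord_iff:
  fixes l q :: nat
  assumes "prime l" "l > 2"
  shows "odd (ord l (q ^ 2)) \<and> even (ord l q) \<longleftrightarrow> (\<exists>e. odd e \<and> [int q ^ e = - 1] (mod int l))"
proof
  assume orders: "odd (ord l (q ^ 2)) \<and> even (ord l q)"
  define k where "k = ord l (q ^ 2)"
  have "[(q ^ 2) ^ k = 1] (mod l)" unfolding k_def by (rule ord)
  then have "[q ^ (2 * k) = 1] (mod l)" by (simp only: power_mult)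
  then have "[int q ^ (2 * k) = 1] (mod int l)" by (simp only: cong_int_power_one_iff)
  then have "int l dvd (int q ^ k - 1) * (int q ^ k + 1)"
    by (simp add: cong_iff_dvd_diff power_mult algebra_simps power2_eq_square)
  moreover have "\<not> int l dvd int q ^ k - 1"
  proof
    assume "int l dvd int q ^ k - 1"
    then have "[int q ^ k = 1] (mod int l)" by (simp add: cong_iff_dvd_diff)
    then have "[q ^ k = 1] (mod l)" by (simp only: cong_int_power_one_iff)
    then have "ord l q dvd k" by (metis ord_divides)
    then show False using orders k_def by auto
  qed
  ultimately have "[int q ^ k = - 1] (mod int l)"
    using assms(1) by (simp add: cong_iff_dvd_diff prime_dvd_mult_iff)
  then show "\<exists>e. odd e \<and> [int q ^ e = - 1] (mod int l)" using orders k_def by blast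
next
  assume "\<exists>e. odd e \<and> [int q ^ e = - 1] (mod int l)"
  then obtain e where e: "odd e" "[int q ^ e = - 1] (mod int l)" by blast
  have "[(int q ^ e) ^ 2 = (- 1) ^ 2] (mod int l)" using e(2) by (rule cong_pow)
  then have "[int q ^ (2 * e) = 1] (mod int l)" by (simp add: power_mult mult.commute)
  then have sq: "[q ^ (2 * e) = 1] (mod l)" by (simp only: cong_int_power_one_iff)
  then have "ord l (q ^ 2) dvd e" by (metis ord_divides power_mult)
  then have "odd (ord l (q ^ 2))" using e(1) by (auto elim: dvdE)
  moreover have "even (ord l q)"
  proof (rule ccontr)
    assume "odd (ord l q)"
    moreover have "ord l q dvd 2 * e" using sq by (metis ord_divides)
    ultimately have "ord l q dvd e" by (simp add: coprime_dvd_mult_right_iff)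
    then have "[int q ^ e = 1] (mod int l)" by (simp only: cong_int_power_one_iff ord_divides)
    then have "[- 1 = 1 :: int] (mod int l)" using e(2) by (metis cong_sym cong_trans)
    then have "int l dvd 2" by (simp add: cong_iff_dvd_diff)
    then show False
      using assms(2) by (metis dvd_imp_le int_dvd_int_iff of_nat_numeral not_le zero_less_numeral)
  qed
  ultimately show "odd (ord l (q ^ 2)) \<and> even (ord l q)" by blast
qed

lemma common_odd_exponent_neg_one:
  fixes q :: nat and L :: "nat set"
  assumes "finite L" "\<And>l. l \<in> L \<Longrightarrow> \<exists>e. odd e \<and> [int q ^ e = - 1] (mod int l)"
  obtains J where "odd J" "\<And>l. l \<in> L \<Longrightarrow> [int q ^ J = - 1] (mod int l)"
proof -
  obtain e where e: "\<And>l. l \<in> L \<Longrightarrow> odd (e l) \<and> [int q ^ e l = - 1] (mod int l)"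
    using assms(2) by metis
  define J where "J = (\<Prod>l\<in>L. e l)"
  have "odd J" unfolding J_def using assms(1) e by (induction L rule: finite_induct) auto
  moreover have "[int q ^ J = - 1] (mod int l)" if "l \<in> L" for l
  proof -
    have "e l dvd J" unfolding J_def using assms(1) that by (rule dvd_prodI)
    then obtain t where t: "J = e l * t" by (elim dvdE)
    then have "odd t" using \<open>odd J\<close> by simp
    have "[(int q ^ e l) ^ t = (- 1) ^ t] (mod int l)" using e[OF that] by (intro cong_pow) auto
    then show ?thesis using \<open>odd t\<close> t by (simp add: power_mult)
  qed
  ultimately show ?thesis using that by blast
qed

lemma cong_power_neg_one_if_prime_divisors:
  fixes z :: int and n :: nat
  assumes "odd n" "\<And>l. prime l \<Longrightarrow> l dvd n \<Longrightarrow> [z = - 1] (mod int l)"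
  shows "[z ^ n = - 1] (mod int n)"
  using assms
proof (induction n rule: less_induct)
  case (less n)
  show ?case
  proof (cases "n = 1")
    case False
    then obtain l where l: "prime l" "l dvd n" by (metis prime_factor_nat)
    then obtain m where m: "n = l * m" by (elim dvdE)
    have "odd m" "odd l" using less.prems(1) m by auto
    moreover have "l > 1" "n > 0" using l(1) prime_gt_1_nat less.prems(1) odd_pos by auto
    ultimately have "m < n" using m by simp
    define w where "w = z ^ m"
    \<comment> \<open>\<open>1 + w ^ l = (1 + w) (1 - w + \<dots> + w ^ (l - 1))\<close>, and the second factor is
      \<open>l = 0\<close> modulo \<open>l\<close> because \<open>w = -1\<close> modulo \<open>l\<close>.\<close>
    have "[w = - 1] (mod int m)" unfolding w_def using less.IH[OF \<open>m < n\<close> \<open>odd m\<close>] less.prems(2) m by auto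
    then have wm: "int m dvd w + 1" by (simp add: cong_iff_dvd_diff)
    have "[z ^ m = (- 1) ^ m] (mod int l)" using less.prems(2) l by (intro cong_pow) auto
    then have "[- w = 1] (mod int l)"
      using \<open>odd m\<close> unfolding w_def by (metis cong_minus_minus_iff minus_minus power_minus_odd power_one)
    then have "[(\<Sum>i<l. (- w) ^ i) = (\<Sum>i<l. 1)] (mod int l)"
      by (intro cong_sum) (metis cong_pow power_one)
    then have "int l dvd (\<Sum>i<l. (- w) ^ i)" using cong_dvd_iff by fastforce
    moreover have "w ^ l + 1 = (w + 1) * (\<Sum>i<l. (- w) ^ i)"
      using one_diff_power_eq[of "- w" l] \<open>odd l\<close> by (simp add: algebra_simps)
    ultimately have "int m * int l dvd w ^ l + 1" using wm by (simp add: mult_dvd_mono)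
    then have "int n dvd w ^ l + 1" using m by (simp add: mult.commute)
    then show ?thesis unfolding w_def m by (simp add: cong_iff_dvd_diff mult.commute flip: power_mult)
  qed simp
qed

lemma card_image_mult_power_mod:
  fixes c Q l :: nat
  assumes "coprime c l" "coprime l Q"
  shows "card ((\<lambda>i. c * Q ^ i mod l) ` {..<ord l Q}) = ord l Q"
proof -
  have "inj_on (\<lambda>i. c * Q ^ i mod l) {..<ord l Q}"
  proof (rule inj_onI)
    fix i j assume ij: "i \<in> {..<ord l Q}" "j \<in> {..<ord l Q}" "c * Q ^ i mod l = c * Q ^ j mod l"
    then have "[Q ^ i = Q ^ j] (mod l)" using cong_mult_lcancel_nat[OF assms(1)] by (simp add: cong_def)
    then have "[i = j] (mod ord l Q)" using order_divides_expdiff[OF assms(2)] by blast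
    then show "i = j" using ij(1,2) cong_less_modulus_unique_nat by auto
  qed
  then show ?thesis by (simp add: card_image)
qed

section \<open>Cyclotomic cosets and SCRIM factors\<close>

lemma SCRIM_if_dvd_power_plus_one:
  fixes f :: "'a::{field,finite} poly"
  assumes q: "q = CHAR('a) ^ e" "CARD('a) = q ^ 2"
    and f: "f \<in> monic_irred_factors ([:0, 1:] ^ n - 1)" and "n > 0" "n dvd q ^ j + 1" "odd j"
  shows "SCRIM q f"
proof -
  have f': "lead_coeff f = 1" "irreducible f" "f dvd [:0, 1:] ^ n - 1"
    using f unfolding monic_irred_factors_def by auto
  have card: "CARD('a) = CHAR('a) ^ (e * 2)" using q by (simp add: power_mult)
  have "even (Suc j)" using \<open>odd j\<close> by simp
  then obtain i where "Suc j = 2 * i" by (elim evenE)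
  then have qi: "q ^ Suc j = CARD('a) ^ i" using q(2) by (simp only: power_mult)
  have "q ^ Suc j + q = q * (q ^ j + 1)" by (simp add: algebra_simps)
  then have "[q ^ Suc j + q = 0] (mod n)"
    unfolding cong_0_iff using \<open>n dvd q ^ j + 1\<close> by (simp only: dvd_mult)
  moreover have "(n - 1) * q + q = n * q" using \<open>n > 0\<close> by (cases n) auto
  then have "[(n - 1) * q + q = 0] (mod n)" by (simp add: cong_0_iff)
  ultimately have "[q ^ Suc j = (n - 1) * q] (mod n)"
    by (meson cong_add_rcancel_nat cong_sym cong_trans)
  then have "CARD('a) ^ i mod n = (n - 1) * q mod n" unfolding qi cong_def .
  then have "f dvd pcompose f ([:0, 1:] ^ ((n - 1) * q))"
    using dvd_pcompose_X_power_mod[OF f'(3) dvd_pcompose_X_power_CARD_power[OF card]] by blast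
  then show ?thesis using SCRIM_iff_dvd_pcompose[OF q f' \<open>n > 0\<close>] by simp
qed

lemma SCRIM_factors_if_odd_ord_square_even_ord:
  fixes q n :: nat
  assumes q: "q = CHAR('a) ^ e" "CARD('a::{field,finite}) = q ^ 2"
    and "odd n" "\<And>l. prime l \<Longrightarrow> l dvd n \<Longrightarrow> odd (ord l (q ^ 2)) \<and> even (ord l q)"
  shows "\<forall>f \<in> monic_irred_factors ([:0, 1::'a:] ^ n - 1). SCRIM q f"
proof -
  have "n > 0" using \<open>odd n\<close> by (rule odd_pos)
  have "\<exists>e. odd e \<and> [int q ^ e = - 1] (mod int l)" if "l \<in> prime_factors n" for l
  proof -
    have "prime l" "l dvd n" using that by auto
    moreover have "l \<noteq> 2" using \<open>l dvd n\<close> \<open>odd n\<close> by auto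
    ultimately show ?thesis
      using assms(4) odd_ord_square_even_ord_iff prime_ge_2_nat by (metis le_neq_implies_less)
  qed
  then obtain J where J: "odd J" "\<And>l. l \<in> prime_factors n \<Longrightarrow> [int q ^ J = - 1] (mod int l)"
    using common_odd_exponent_neg_one[of "prime_factors n"] by blast
  have "[(int q ^ J) ^ n = - 1] (mod int n)"
    using cong_power_neg_one_if_prime_divisors[OF \<open>odd n\<close>] J(2) \<open>n > 0\<close> by (simp add: in_prime_factors_iff)
  then have "n dvd q ^ (J * n) + 1"
    by (simp add: cong_iff_dvd_diff power_mult add.commute flip: int_dvd_int_iff)
  moreover have "odd (J * n)" using J(1) \<open>odd n\<close> by simp
  ultimately show ?thesis using SCRIM_if_dvd_power_plus_one[OF q _ \<open>n > 0\<close>] by blast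
qed

text \<open>If \<open>g\<close> is stable under \<open>x \<mapsto> x ^ m\<close> and no \<open>m * Q ^ i\<close> were congruent to a power of
  \<open>Q = CARD('a)\<close>, the exponents \<open>Q ^ i\<close> and \<open>m * Q ^ i\<close> with \<open>i < ord l Q\<close> would give
  \<open>2 * ord l Q\<close> incongruent roots \<open>x ^ t\<close> of \<open>g\<close> modulo \<open>g\<close>, while \<open>degree g \<le> ord l Q\<close>.\<close>

lemma cong_power_CARD_if_dvd_pcompose:
  fixes g :: "'a::{field,finite} poly"
  assumes card: "CARD('a) = CHAR('a) ^ j" and l: "prime l" "coprime l (CARD('a))" "coprime m l"
    and g: "irreducible g" "g dvd [:0, 1:] ^ l - 1" "\<not> g dvd [:0, 1:] - 1"
    and g_m: "g dvd pcompose g ([:0, 1:] ^ m)"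
  obtains i i' where "[CARD('a) ^ i' = m * CARD('a) ^ i] (mod l)"
proof -
  define k where "k = ord l (CARD('a))"
  have "k > 0" unfolding k_def using l(2) by (simp add: ord_eq_0)
  have "[CARD('a) ^ k = 1] (mod l)" unfolding k_def by (rule ord)
  define T where "T c = (\<lambda>i. c * CARD('a) ^ i mod l) ` {..<k}" for c
  have card_T: "card (T 1) = k" "card (T m) = k"
    unfolding T_def k_def
    using card_image_mult_power_mod[OF _ l(2), of 1] card_image_mult_power_mod[OF l(3,2)]
    by simp_all
  have stable_T: "g dvd pcompose g ([:0, 1:] ^ t)"
    if "t \<in> T c" "g dvd pcompose g ([:0, 1:] ^ c)" for c t
  proof -
    from that(1) obtain i where "t = c * CARD('a) ^ i mod l" unfolding T_def by blast
    moreover have "g dvd pcompose g ([:0, 1:] ^ (c * CARD('a) ^ i))"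
      using dvd_pcompose_X_power_mult[OF that(2) dvd_pcompose_X_power_CARD_power[OF card]] .
    ultimately show ?thesis using dvd_pcompose_X_power_mod[OF g(2)] by simp
  qed
  have "card (T 1 \<union> T m) \<le> degree g"
  proof (rule card_stable_exponents_le_degree[OF g(1)])
    show "finite (T 1 \<union> T m)" unfolding T_def by simp
    show "g dvd pcompose g ([:0, 1:] ^ t)" if "t \<in> T 1 \<union> T m" for t
      using that stable_T[of t 1] stable_T[OF _ g_m] by auto
    fix s t assume "s \<in> T 1 \<union> T m" "t \<in> T 1 \<union> T m" "g dvd [:0, 1:] ^ s - [:0, 1:] ^ t"
    moreover have "prime_elem g" using g(1) by (rule field_poly_irreducible_imp_prime)
    moreover have "x < l" if "x \<in> T 1 \<union> T m" for x using that prime_gt_0_nat[OF l(1)] unfolding T_def by auto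
    ultimately show "s = t" using eq_if_dvd_X_power_diff l(1) g(2,3) by blast
  qed
  moreover have "degree g \<le> k"
    by (rule degree_le_if_dvd_X_power_minus_one[OF card g(1,2)]) fact+
  ultimately have "T 1 \<inter> T m \<noteq> {}" using card_T \<open>k > 0\<close> by (auto simp: card_Un_disjoint T_def)
  then show ?thesis using that unfolding T_def cong_def by auto
qed

lemma odd_ord_square_even_ord_if_SCRIM_factors:
  fixes q l :: nat
  assumes q: "q = CHAR('a) ^ e" "CARD('a::{field,finite}) = q ^ 2" "e > 0"
    and l: "prime l" "l > 2" "coprime l q"
    and "\<forall>f \<in> monic_irred_factors ([:0, 1::'a:] ^ l - 1). SCRIM q f"
  shows "odd (ord l (q ^ 2)) \<and> even (ord l q)"
proof -
  have "coprime l (CHAR('a))" using l(3) q(1,3) by simp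
  then have "of_nat l \<noteq> (0 :: 'a)" by (rule of_nat_neq_zero_if_coprime_CHAR)
  moreover have "l > 1" using l(2) by simp
  ultimately obtain g :: "'a poly" where g: "lead_coeff g = 1" "irreducible g" "g dvd [:0, 1:] ^ l - 1"
    "\<not> g dvd [:0, 1:] - 1"
    using exists_irreducible_factor_not_dvd_X_minus_one by blast
  define m where "m = (l - 1) * q"
  have "SCRIM q g" using assms(7) g unfolding monic_irred_factors_def by blast
  then have "g dvd pcompose g ([:0, 1:] ^ m)"
    using SCRIM_iff_dvd_pcompose[OF q(1,2) g(1-3)] l(2) by (simp add: m_def)
  moreover have "coprime (l - 1) l" using l(2) by (intro coprime_diff_one_left_nat) simp
  then have "coprime m l" using l(3) by (simp add: m_def coprime_commute)
  moreover have "CARD('a) = CHAR('a) ^ (e * 2)" using q by (simp add: power_mult)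
  moreover have "coprime l (CARD('a))" using l(3) q(2) by simp
  ultimately obtain i j where "[CARD('a) ^ j = m * CARD('a) ^ i] (mod l)"
    using cong_power_CARD_if_dvd_pcompose l(1) g(2-4) by metis
  then have "[int q ^ (2 * j) = (int l - 1) * (int q * int q ^ (2 * i))] (mod int l)"
    using l(2) q(2) by (simp add: m_def power_mult of_nat_diff mult.assoc flip: cong_int_iff)
  moreover have "[(int l - 1) * (int q * int q ^ (2 * i)) = (- 1) * (int q * int q ^ (2 * i))] (mod int l)"
    by (intro cong_mult cong_refl) (simp add: cong_iff_dvd_diff)
  ultimately have "[int q ^ (2 * j) = - (int q ^ (2 * i + 1))] (mod int l)"
    by (simp add: cong_trans)
  then have "\<exists>e. odd e \<and> [int q ^ e = - 1] (mod int l)"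
    using odd_exponent_neg_one_if_cong_neg[of q l "2 * j" "2 * i + 1"] l(3) by (simp add: coprime_commute)
  then show ?thesis using odd_ord_square_even_ord_iff[OF l(1,2)] by blast
qed

theorem theorem2p7:
  fixes q n :: nat
  assumes "prime_power q"
    and "card (UNIV :: 'a::{field,finite} set) = q ^ 2"
    and "odd n" and "n > 0" and "coprime n q"
  shows "((\<forall>f \<in> monic_irred_factors ([:0, 1::'a:] ^ n - 1). SCRIM q f)
          \<longleftrightarrow> (\<forall>l. prime l \<and> l dvd n \<longrightarrow>
                 (\<forall>f \<in> monic_irred_factors ([:0, 1::'a:] ^ l - 1). SCRIM q f)))
       \<and> ((\<forall>l. prime l \<and> l dvd n \<longrightarrow>
                 (\<forall>f \<in> monic_irred_factors ([:0, 1::'a:] ^ l - 1). SCRIM q f))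
          \<longleftrightarrow> (\<forall>l. prime l \<and> l dvd n \<longrightarrow> odd (ord l (q ^ 2)) \<and> even (ord l q)))"
proof -
  obtain e where e: "e > 0" "q = CHAR('a) ^ e"
    using CHAR_power_if_prime_power_card[OF assms(1,2)] .
  have factors_mono: "monic_irred_factors ([:0, 1::'a:] ^ l - 1) \<subseteq> monic_irred_factors ([:0, 1:] ^ n - 1)"
    if "l dvd n" for l
  proof -
    have "([:0, 1::'a:] ^ l - 1) dvd [:0, 1:] ^ n - [:0, 1:] ^ 0"
      using that by (intro power_minus_one_dvd_power_diff) simp
    then show ?thesis unfolding monic_irred_factors_def by (auto intro: dvd_trans)
  qed
  have prime_divisor: "l > 2" "coprime l q" if "prime l" "l dvd n" for l
  proof -
    have "l \<noteq> 2" using that(2) assms(3) by auto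
    then show "l > 2" using prime_ge_2_nat[OF that(1)] by simp
    show "coprime l q" using that(2) assms(5) coprime_divisors[of l n q q] by simp
  qed
  show ?thesis
    using factors_mono odd_ord_square_even_ord_if_SCRIM_factors[OF e(2) assms(2) e(1)] prime_divisor
      SCRIM_factors_if_odd_ord_square_even_ord[OF e(2) assms(2) assms(3)]
    by blast
qed

end
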